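(* Let $V$ be a vector space over an algebraically closed field of characteristic zero with $n=\dim V \ge 3$, and let $d\ge 2$. Suppose $H_d \subset \mathbb{P} V^* \simeq \mathbb{P}^{n-1}$ is a (not necessarily reduced) hypersurface of degree $d$ which is not a cone. Then a general hyperplane section $H_d \cap \mathbb{P}^{n-2}$ is not a cone. Equivalently, if $F\in S^d V$ is a concise polynomial in $n$ variables $x_1,\dots,x_n$ of degree $d \ge 2$, and $x_n = a_1 x_1 + \dotsb + a_{n-1} x_{n-1}$ is a general linear substitution, then $F'(x_1,\dots,x_{n-1})=F(x_1,\dots,x_{n-1}, a_1 x_1 + \dotsb + a_{n-1} x_{n-1})$ essentially depends on $n-1$ variables and no fewer.
   Context: A form $F\in S^dV$ is concise if there is no proper subspace $V'\subsetneq V$ with $F\in S^dV'$ (i.e., $F$ cannot be written in fewer variables after a linear change of coordinates); equivalently the hypersurface $V(F)$ is not a cone. A subscheme is a cone if it has a vertex, i.e., a point $p$ such that the union of lines joining $p$ to the subscheme is the subscheme itself (set-theoretically). *)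

theory Defs
  imports "HOL-Computational_Algebra.Polynomial"
begin

definition monoms :: "nat \<Rightarrow> nat \<Rightarrow> (nat \<Rightarrow> nat) set" where
  "monoms n d = {\<alpha>. (\<forall>i\<ge>n. \<alpha> i = 0) \<and> (\<Sum>i<n. \<alpha> i) = d}"

definition monoms_le :: "nat \<Rightarrow> nat \<Rightarrow> (nat \<Rightarrow> nat) set" where
  "monoms_le n D = {\<alpha>. (\<forall>i\<ge>n. \<alpha> i = 0) \<and> (\<Sum>i<n. \<alpha> i) \<le> D}"

text \<open>A form of degree d in n variables (an element of S^d V, dim V = n) is given by
  its coefficient function c on the monomials of degree d; coefficients outside
  monoms n d are ignored.  form_eval gives the associated polynomial function.\<close>

definition form_eval :: "nat \<Rightarrow> nat \<Rightarrow> ((nat \<Rightarrow> nat) \<Rightarrow> 'a::comm_ring_1) \<Rightarrow> (nat \<Rightarrow> 'a) \<Rightarrow> 'a" where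
  "form_eval n d c x = (\<Sum>\<alpha>\<in>monoms n d. c \<alpha> * (\<Prod>i<n. x i ^ \<alpha> i))"

definition poly_eval :: "nat \<Rightarrow> nat \<Rightarrow> ((nat \<Rightarrow> nat) \<Rightarrow> 'a::comm_ring_1) \<Rightarrow> (nat \<Rightarrow> 'a) \<Rightarrow> 'a" where
  "poly_eval n D p x = (\<Sum>\<alpha>\<in>monoms_le n D. p \<alpha> * (\<Prod>i<n. x i ^ \<alpha> i))"

text \<open>A degree-d polynomial function f in the n variables x_0..x_(n-1) is concise if
  it does not lie in S^d V' for a proper subspace V' (dim V' = m < n), i.e. it cannot
  be written as a degree-d form G in m < n variables evaluated at m linear forms
  L_j = sum_i L j i x_i in the original variables.\<close>

definition concise_fn :: "nat \<Rightarrow> nat \<Rightarrow> ((nat \<Rightarrow> 'a::comm_ring_1) \<Rightarrow> 'a) \<Rightarrow> bool" where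
  "concise_fn n d f \<longleftrightarrow>
     \<not> (\<exists>m<n. \<exists>(L :: nat \<Rightarrow> nat \<Rightarrow> 'a) (G :: (nat \<Rightarrow> nat) \<Rightarrow> 'a).
          \<forall>x. f x = form_eval m d G (\<lambda>j. \<Sum>i<n. L j i * x i))"

definition concise :: "nat \<Rightarrow> nat \<Rightarrow> ((nat \<Rightarrow> nat) \<Rightarrow> 'a::comm_ring_1) \<Rightarrow> bool" where
  "concise n d c \<longleftrightarrow> concise_fn n d (form_eval n d c)"

definition subst_last :: "nat \<Rightarrow> nat \<Rightarrow> ((nat \<Rightarrow> nat) \<Rightarrow> 'a::comm_ring_1) \<Rightarrow> (nat \<Rightarrow> 'a) \<Rightarrow> (nat \<Rightarrow> 'a) \<Rightarrow> 'a" where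
  "subst_last n d c a x = form_eval n d c (x(n - 1 := (\<Sum>i<n - 1. a i * x i)))"

end

theory Submission
  imports Defs "Jordan_Normal_Form.Determinant"
begin

text \<open>A form \<open>F\<close> fails to be concise exactly when it has a vertex, a direction \<open>w \<noteq> 0\<close> with
  \<open>F (x + t w) = F x\<close>.  An induction on the dimension, which passes from \<open>F\<close> to its coefficients
  along a line, produces a hyperplane transversal to the last coordinate axis on which \<open>F\<close> still has
  no vertex; it is the graph of a substitution \<open>x\<^sub>n = \<Sum> a\<^sub>0\<^sub>i x\<^sub>i\<close>.  Without a vertex the
  directional derivatives of \<open>F' = F(x, a\<^sub>0 x)\<close> along the coordinate directions are linearly
  independent functions, so at suitable points \<open>y\<^sub>i\<close> the matrix \<open>(\<partial>\<^sub>j F'(y\<^sub>i))\<close> is invertible.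
  Its determinant is a polynomial in the substitution coefficients \<open>a\<close> that does not vanish at
  \<open>a\<^sub>0\<close>, and wherever it does not vanish \<open>F'\<close> is concise, since a representation through fewer
  linear forms yields a vertex and with it a kernel vector of the matrix.\<close>

section \<open>Linear functionals and spans\<close>

definition linear_functional :: "((nat \<Rightarrow> 'a::field) \<Rightarrow> 'a) \<Rightarrow> bool" where
  "linear_functional \<mu> \<longleftrightarrow>
     (\<forall>x y. \<mu> (\<lambda>i. x i + y i) = \<mu> x + \<mu> y) \<and> (\<forall>c x. \<mu> (\<lambda>i. c * x i) = c * \<mu> x)"

definition lin_span :: "(nat \<Rightarrow> 'a::field) set \<Rightarrow> (nat \<Rightarrow> 'a) set" where
  "lin_span B = {x. \<exists>c. x = (\<lambda>i. \<Sum>v\<in>B. c v * v i)}"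

definition lin_subspace :: "(nat \<Rightarrow> 'a::field) set \<Rightarrow> bool" where
  "lin_subspace S \<longleftrightarrow> (\<lambda>_. 0) \<in> S \<and> (\<forall>x\<in>S. \<forall>y\<in>S. (\<lambda>i. x i + y i) \<in> S) \<and>
     (\<forall>c. \<forall>x\<in>S. (\<lambda>i. c * x i) \<in> S)"

lemma linear_functional_add: "linear_functional \<mu> \<Longrightarrow> \<mu> (\<lambda>i. x i + y i) = \<mu> x + \<mu> y"
  by (simp add: linear_functional_def)

lemma linear_functional_smult: "linear_functional \<mu> \<Longrightarrow> \<mu> (\<lambda>i. c * x i) = c * \<mu> x"
  by (simp add: linear_functional_def)

lemma linear_functional_zero: "linear_functional \<mu> \<Longrightarrow> \<mu> (\<lambda>_. 0) = 0"
  using linear_functional_smult[of \<mu> 0 "\<lambda>_. 0"] by simp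

lemma linear_functional_lincomb:
  "linear_functional \<mu> \<Longrightarrow> \<mu> (\<lambda>i. a * x i + b * y i) = a * \<mu> x + b * \<mu> y"
  by (simp add: linear_functional_def)

lemma linear_functional_diff:
  "linear_functional \<mu> \<Longrightarrow> \<mu> (\<lambda>i. x i - c * y i) = \<mu> x - c * \<mu> y"
  using linear_functional_lincomb[of \<mu> 1 x "- c" y] by simp

lemma linear_functional_sum:
  assumes "linear_functional \<mu>" "finite A"
  shows "\<mu> (\<lambda>i. \<Sum>a\<in>A. c a * g a i) = (\<Sum>a\<in>A. c a * \<mu> (g a))"
  using assms(2)
proof (induction A rule: finite_induct)
  case empty
  show ?case by (simp add: linear_functional_zero[OF assms(1)])
next
  case (insert a A)
  have "\<mu> (\<lambda>i. \<Sum>b\<in>insert a A. c b * g b i) = \<mu> (\<lambda>i. c a * g a i + (\<Sum>b\<in>A. c b * g b i))"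
    using insert by simp
  also have "\<dots> = c a * \<mu> (g a) + \<mu> (\<lambda>i. \<Sum>b\<in>A. c b * g b i)"
    by (simp add: linear_functional_add[OF assms(1)] linear_functional_smult[OF assms(1)])
  finally show ?case
    using insert by simp
qed

lemma lin_subspace_lincomb:
  assumes "lin_subspace S" "x \<in> S" "y \<in> S"
  shows "(\<lambda>i. a * x i + b * y i) \<in> S"
proof -
  from assms(1) have add: "\<And>u v. u \<in> S \<Longrightarrow> v \<in> S \<Longrightarrow> (\<lambda>i. u i + v i) \<in> S"
    and smult: "\<And>c u. u \<in> S \<Longrightarrow> (\<lambda>i. c * u i) \<in> S"
    unfolding lin_subspace_def by blast+
  show ?thesis using add[OF smult[OF assms(2)] smult[OF assms(3)]] .
qed

lemma lin_subspace_diff: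
  assumes "lin_subspace S" "x \<in> S" "y \<in> S"
  shows "(\<lambda>i. x i - c * y i) \<in> S"
  using lin_subspace_lincomb[OF assms, of 1 "- c"] by simp

lemma lin_subspace_sum:
  assumes "lin_subspace S" "finite A" "\<And>a. a \<in> A \<Longrightarrow> g a \<in> S"
  shows "(\<lambda>i. \<Sum>a\<in>A. c a * g a i) \<in> S"
  using assms(2,3)
proof (induction A rule: finite_induct)
  case empty
  then show ?case using assms(1) by (simp add: lin_subspace_def)
next
  case (insert a A)
  then have "(\<lambda>i. c a * g a i + 1 * (\<Sum>b\<in>A. c b * g b i)) \<in> S"
    by (intro lin_subspace_lincomb[OF assms(1)]) auto
  then show ?case using insert by simp
qed

lemma lin_subspace_kernel:
  "lin_subspace S \<Longrightarrow> linear_functional \<mu> \<Longrightarrow> lin_subspace {x \<in> S. \<mu> x = 0}"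
  unfolding lin_subspace_def
  by (simp add: linear_functional_add linear_functional_smult linear_functional_zero)

lemma lin_subspace_lin_span: "lin_subspace (lin_span B)"
  unfolding lin_subspace_def lin_span_def
proof (intro conjI ballI allI; clarify?)
  show "\<exists>c. (\<lambda>_. 0::'a) = (\<lambda>i. \<Sum>v\<in>B. c v * v i)"
    by (rule exI[of _ "\<lambda>_. 0"]) simp
next
  fix c1 c2 :: "(nat \<Rightarrow> 'a) \<Rightarrow> 'a"
  show "\<exists>c. (\<lambda>i. (\<Sum>v\<in>B. c1 v * v i) + (\<Sum>v\<in>B. c2 v * v i)) = (\<lambda>i. \<Sum>v\<in>B. c v * v i)"
    by (rule exI[of _ "\<lambda>v. c1 v + c2 v"]) (simp add: sum.distrib distrib_right)
next
  fix c :: 'a and c1 :: "(nat \<Rightarrow> 'a) \<Rightarrow> 'a"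
  show "\<exists>c'. (\<lambda>i. c * (\<Sum>v\<in>B. c1 v * v i)) = (\<lambda>i. \<Sum>v\<in>B. c' v * v i)"
    by (rule exI[of _ "\<lambda>v. c * c1 v"]) (simp add: sum_distrib_left mult_ac)
qed

lemma in_lin_span:
  assumes "finite B" "v \<in> B"
  shows "v \<in> lin_span B"
proof -
  have "(\<Sum>u\<in>B. (if u = v then 1 else 0) * u i) = v i" for i
  proof -
    have "(\<Sum>u\<in>B. (if u = v then 1 else 0) * u i) = (\<Sum>u\<in>B. if u = v then u i else 0)"
      by (intro sum.cong) auto
    also have "\<dots> = v i" using assms by (simp add: sum.delta)
    finally show ?thesis .
  qed
  then show ?thesis unfolding lin_span_def by (intro CollectI exI[of _ "\<lambda>u. if u = v then 1 else 0"]) auto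
qed

lemma lin_span_subset:
  assumes "finite B" "lin_subspace S" "B \<subseteq> S"
  shows "lin_span B \<subseteq> S"
proof
  fix x assume "x \<in> lin_span B"
  then obtain c where "x = (\<lambda>i. \<Sum>v\<in>B. c v * v i)"
    unfolding lin_span_def by blast
  then show "x \<in> S"
    using assms by (simp add: lin_subspace_sum subset_eq)
qed

lemma lin_span_kernel_subset:
  assumes l: "linear_functional l" and B: "finite B" and v0: "v0 \<in> B" "l v0 \<noteq> 0"
    and x: "x \<in> lin_span B" "l x = 0"
  shows "x \<in> lin_span ((\<lambda>v i. v i - l v / l v0 * v0 i) ` (B - {v0}))"
proof -
  define \<phi> where "\<phi> v = (\<lambda>i. v i - l v / l v0 * v0 i)" for v
  obtain a where xa: "x = (\<lambda>i. \<Sum>v\<in>B. a v * v i)"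
    using x(1) unfolding lin_span_def by blast
  have l_\<phi>: "l (\<phi> v) = 0" for v
    unfolding \<phi>_def linear_functional_diff[OF l] using v0(2) by simp
  define x' where "x' = (\<lambda>i. \<Sum>v\<in>B - {v0}. a v * \<phi> v i)"
  define \<kappa> where "\<kappa> = a v0 + (\<Sum>v\<in>B - {v0}. a v * (l v / l v0))"
  have x'_mem: "x' \<in> lin_span (\<phi> ` (B - {v0}))"
    unfolding x'_def using B
    by (intro lin_subspace_sum[OF lin_subspace_lin_span] in_lin_span) auto
  have x_decomp: "x = (\<lambda>i. x' i + \<kappa> * v0 i)"
  proof
    fix i
    have "x i = a v0 * v0 i + (\<Sum>v\<in>B - {v0}. a v * v i)"
      using xa B v0(1) by (simp add: sum.remove)
    moreover have "x' i = (\<Sum>v\<in>B - {v0}. a v * v i) - (\<Sum>v\<in>B - {v0}. a v * (l v / l v0)) * v0 i"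
    proof -
      have "x' i = (\<Sum>v\<in>B - {v0}. a v * v i - (a v * (l v / l v0)) * v0 i)"
        unfolding x'_def \<phi>_def by (intro sum.cong refl) (simp add: right_diff_distrib mult.assoc)
      then show ?thesis by (simp only: sum_subtractf sum_distrib_right)
    qed
    ultimately show "x i = x' i + \<kappa> * v0 i"
      by (simp add: \<kappa>_def algebra_simps)
  qed
  have "l x' = (\<Sum>v\<in>B - {v0}. a v * l (\<phi> v))"
    unfolding x'_def using B by (intro linear_functional_sum[OF l]) simp
  also have "\<dots> = 0"
    by (simp add: l_\<phi>)
  finally have "l x = \<kappa> * l v0"
    using x_decomp linear_functional_lincomb[OF l, of 1 x' \<kappa> v0] by simp
  then have "\<kappa> = 0" using x(2) v0(2) by simp
  then show ?thesis using x_decomp x'_mem by (simp add: \<phi>_def)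
qed

lemma lin_span_kernel_smaller:
  assumes l: "linear_functional l" and B: "finite B" and q: "q \<in> lin_span B" "l q \<noteq> 0"
  shows "\<exists>B'. finite B' \<and> card B' < card B \<and> lin_span B' = {x \<in> lin_span B. l x = 0}"
proof -
  obtain c where "q = (\<lambda>i. \<Sum>v\<in>B. c v * v i)"
    using q(1) unfolding lin_span_def by blast
  then have "l q = (\<Sum>v\<in>B. c v * l v)"
    using linear_functional_sum[OF l B] by simp
  then obtain v0 where v0: "v0 \<in> B" "l v0 \<noteq> 0"
    using q(2) by (metis (no_types, lifting) mult_zero_right sum.neutral)
  define B' where "B' = (\<lambda>v i. v i - l v / l v0 * v0 i) ` (B - {v0})"
  have "card B' \<le> card (B - {v0})"
    unfolding B'_def using B by (intro card_image_le) simp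
  also have "\<dots> < card B"
    using v0(1) B by (intro card_Diff1_less)
  finally have "card B' < card B" .
  moreover have "lin_span B' \<subseteq> {x \<in> lin_span B. l x = 0}"
  proof (rule lin_span_subset)
    show "B' \<subseteq> {x \<in> lin_span B. l x = 0}"
    proof
      fix x assume "x \<in> B'"
      then obtain v where v: "v \<in> B" "x = (\<lambda>i. v i - l v / l v0 * v0 i)"
        unfolding B'_def by blast
      have "x \<in> lin_span B"
        unfolding v(2) using B v(1) v0(1)
        by (intro lin_subspace_diff[OF lin_subspace_lin_span] in_lin_span)
      moreover have "l x = 0"
        unfolding v(2) linear_functional_diff[OF l] using v0(2) by simp
      ultimately show "x \<in> {x \<in> lin_span B. l x = 0}" by simp
    qed
  qed (use B lin_subspace_kernel[OF lin_subspace_lin_span l] in \<open>auto simp: B'_def\<close>)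
  moreover have "{x \<in> lin_span B. l x = 0} \<subseteq> lin_span B'"
    unfolding B'_def using lin_span_kernel_subset[OF l B v0] by blast
  moreover have "finite B'"
    using B by (simp add: B'_def)
  ultimately show ?thesis
    by blast
qed

section \<open>Polynomial functions\<close>

inductive polyfun :: "nat \<Rightarrow> ((nat \<Rightarrow> 'a::comm_ring_1) \<Rightarrow> 'a) \<Rightarrow> bool" for m where
  polyfun_var: "i < m \<Longrightarrow> polyfun m (\<lambda>x. x i)"
| polyfun_const: "polyfun m (\<lambda>x. c)"
| polyfun_add: "polyfun m f \<Longrightarrow> polyfun m g \<Longrightarrow> polyfun m (\<lambda>x. f x + g x)"
| polyfun_mult: "polyfun m f \<Longrightarrow> polyfun m g \<Longrightarrow> polyfun m (\<lambda>x. f x * g x)"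

lemma polyfun_sum:
  "finite A \<Longrightarrow> (\<And>a. a \<in> A \<Longrightarrow> polyfun m (f a)) \<Longrightarrow> polyfun m (\<lambda>x. \<Sum>a\<in>A. f a x)"
  by (induction A rule: finite_induct) (auto intro: polyfun.intros)

lemma polyfun_prod:
  "finite A \<Longrightarrow> (\<And>a. a \<in> A \<Longrightarrow> polyfun m (f a)) \<Longrightarrow> polyfun m (\<lambda>x. \<Prod>a\<in>A. f a x)"
  by (induction A rule: finite_induct) (auto intro: polyfun.intros)

lemma polyfun_power: "polyfun m f \<Longrightarrow> polyfun m (\<lambda>x. f x ^ k)"
  by (induction k) (auto intro: polyfun.intros)

lemma polyfun_cong: "polyfun m f \<Longrightarrow> (\<And>i. i < m \<Longrightarrow> x i = y i) \<Longrightarrow> f x = f y"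
  by (induction rule: polyfun.induct) auto

lemma polyfun_compose:
  "polyfun m f \<Longrightarrow> (\<And>i. i < m \<Longrightarrow> polyfun k (h i)) \<Longrightarrow> polyfun k (\<lambda>a. f (\<lambda>i. h i a))"
  by (induction rule: polyfun.induct) (auto intro: polyfun.intros)

lemma finite_monoms_le: "finite (monoms_le m D)"
proof -
  have "monoms_le m D \<subseteq> {f. \<forall>x. (x \<in> {..<m} \<longrightarrow> f x \<in> {..D}) \<and> (x \<notin> {..<m} \<longrightarrow> f x = 0)}"
  proof
    fix \<alpha> assume \<alpha>: "\<alpha> \<in> monoms_le m D"
    have "\<alpha> x \<le> D" if "x < m" for x
    proof -
      have "\<alpha> x \<le> (\<Sum>i<m. \<alpha> i)" using that by (intro member_le_sum) auto
      then show ?thesis using \<alpha> by (auto simp: monoms_le_def)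
    qed
    then show "\<alpha> \<in> {f. \<forall>x. (x \<in> {..<m} \<longrightarrow> f x \<in> {..D}) \<and> (x \<notin> {..<m} \<longrightarrow> f x = 0)}"
      using \<alpha> by (auto simp: monoms_le_def)
  qed
  then show ?thesis
    by (rule finite_subset) (intro finite_set_of_finite_funs, auto)
qed

lemma monoms_subset_monoms_le: "monoms m d \<subseteq> monoms_le m d"
  by (auto simp: monoms_def monoms_le_def)

lemma finite_monoms: "finite (monoms m d)"
  using finite_subset[OF monoms_subset_monoms_le finite_monoms_le] .

lemma monoms_le_0: "monoms_le m 0 = {\<lambda>_. 0}"
proof -
  have "\<alpha> i = 0" if "\<alpha> \<in> monoms_le m 0" for \<alpha> i
  proof (cases "i < m")
    case True
    have "\<alpha> i \<le> (\<Sum>i<m. \<alpha> i)" using True by (intro member_le_sum) auto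
    then show ?thesis using that by (auto simp: monoms_le_def)
  next
    case False
    then show ?thesis using that by (auto simp: monoms_le_def)
  qed
  then have "\<alpha> \<in> monoms_le m 0 \<Longrightarrow> \<alpha> = (\<lambda>_. 0)" for \<alpha>
    by (simp add: fun_eq_iff)
  moreover have "(\<lambda>_. 0) \<in> monoms_le m 0"
    by (simp add: monoms_le_def)
  ultimately show ?thesis by blast
qed

lemma polyfun_form_eval: "polyfun m (form_eval m d c)"
  unfolding form_eval_def
  by (intro polyfun_sum finite_monoms polyfun_mult polyfun_const polyfun_prod polyfun_power polyfun_var)
    auto

lemma poly_eval_mono_degree:
  assumes "D \<le> D'"
  shows "poly_eval m D P x = poly_eval m D' (\<lambda>\<alpha>. if \<alpha> \<in> monoms_le m D then P \<alpha> else 0) x"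
proof -
  have "monoms_le m D \<subseteq> monoms_le m D'"
    using assms by (auto simp: monoms_le_def)
  then show ?thesis
    unfolding poly_eval_def by (rule sum.mono_neutral_cong_left[OF finite_monoms_le]) auto
qed

lemma poly_eval_var:
  assumes "i < m"
  shows "poly_eval m 1 (\<lambda>\<alpha>. if \<alpha> = (\<lambda>j. if j = i then 1 else 0) then 1 else 0) x = (x i :: 'a::comm_ring_1)"
proof -
  let ?e = "(\<lambda>j. if j = i then 1 else 0) :: nat \<Rightarrow> nat"
  have e: "?e \<in> monoms_le m 1"
    using assms unfolding monoms_le_def by simp
  have "poly_eval m 1 (\<lambda>\<alpha>. if \<alpha> = ?e then 1 else 0) x =
      (\<Sum>\<alpha>\<in>monoms_le m 1. if \<alpha> = ?e then (\<Prod>j<m. x j ^ \<alpha> j) else 0)"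
    unfolding poly_eval_def by (intro sum.cong refl) simp
  also have "\<dots> = (\<Prod>j<m. x j ^ ?e j)"
    by (subst sum.delta[OF finite_monoms_le]) (simp only: e if_True)
  also have "\<dots> = (\<Prod>j<m. if j = i then x j else 1)"
    by (intro prod.cong) auto
  also have "\<dots> = x i"
    using assms by (simp add: prod.delta)
  finally show ?thesis .
qed

lemma poly_eval_mult:
  fixes P Q :: "(nat \<Rightarrow> nat) \<Rightarrow> 'a::comm_ring_1"
  shows "\<exists>R. \<forall>x. poly_eval m D1 P x * poly_eval m D2 Q x = poly_eval m (D1 + D2) R x"
proof -
  let ?M1 = "monoms_le m D1" and ?M2 = "monoms_le m D2" and ?M = "monoms_le m (D1 + D2)"
  let ?g = "\<lambda>(\<alpha>::nat \<Rightarrow> nat, \<beta>::nat \<Rightarrow> nat). (\<lambda>i. \<alpha> i + \<beta> i)"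
  define R where "R \<gamma> = (\<Sum>p\<in>{p \<in> ?M1 \<times> ?M2. ?g p = \<gamma>}. P (fst p) * Q (snd p))" for \<gamma>
  have fin: "finite (?M1 \<times> ?M2)"
    using finite_monoms_le by auto
  have img: "?g ` (?M1 \<times> ?M2) \<subseteq> ?M"
    by (clarify, simp add: monoms_le_def sum.distrib add_mono)
  have "poly_eval m D1 P x * poly_eval m D2 Q x = poly_eval m (D1 + D2) R x" for x
  proof -
    let ?X = "\<lambda>\<alpha>. \<Prod>i<m. x i ^ \<alpha> i"
    have X_add: "?X (\<lambda>i. \<alpha> i + \<beta> i) = ?X \<alpha> * ?X \<beta>" for \<alpha> \<beta>
      by (simp add: power_add prod.distrib)
    have "poly_eval m D1 P x * poly_eval m D2 Q x = (\<Sum>\<alpha>\<in>?M1. \<Sum>\<beta>\<in>?M2. (P \<alpha> * ?X \<alpha>) * (Q \<beta> * ?X \<beta>))"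
      unfolding poly_eval_def by (simp add: sum_product)
    also have "\<dots> = (\<Sum>p\<in>?M1 \<times> ?M2. P (fst p) * Q (snd p) * ?X (?g p))"
      by (simp add: sum.cartesian_product case_prod_beta X_add mult_ac)
    also have "\<dots> = (\<Sum>\<gamma>\<in>?M. \<Sum>p\<in>{p \<in> ?M1 \<times> ?M2. ?g p = \<gamma>}. P (fst p) * Q (snd p) * ?X (?g p))"
      by (rule sum.group[OF fin finite_monoms_le img, symmetric])
    also have "\<dots> = (\<Sum>\<gamma>\<in>?M. R \<gamma> * ?X \<gamma>)"
      unfolding R_def sum_distrib_right
      by (rule sum.cong[OF refl], rule sum.cong[OF refl]) (simp split: prod.splits)
    finally show ?thesis unfolding poly_eval_def .
  qed
  then show ?thesis by blast
qed

lemma polyfun_imp_poly_eval: "polyfun m f \<Longrightarrow> \<exists>D P. \<forall>x. f x = poly_eval m D P x"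
proof (induction rule: polyfun.induct)
  case (polyfun_var i)
  show ?case using poly_eval_var[OF polyfun_var, symmetric] by blast
next
  case (polyfun_const c)
  have "poly_eval m 0 (\<lambda>_. c) x = c" for x
    unfolding poly_eval_def monoms_le_0 by simp
  then show ?case by (intro exI allI) (rule sym)
next
  case (polyfun_add f g)
  then obtain D1 P1 D2 P2 where f: "\<forall>x. f x = poly_eval m D1 P1 x" and g: "\<forall>x. g x = poly_eval m D2 P2 x"
    by blast
  let ?D = "max D1 D2"
  let ?P1 = "\<lambda>\<alpha>. if \<alpha> \<in> monoms_le m D1 then P1 \<alpha> else 0"
  let ?P2 = "\<lambda>\<alpha>. if \<alpha> \<in> monoms_le m D2 then P2 \<alpha> else 0"
  have "f x + g x = poly_eval m ?D (\<lambda>\<alpha>. ?P1 \<alpha> + ?P2 \<alpha>) x" for x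
  proof -
    have "poly_eval m ?D (\<lambda>\<alpha>. ?P1 \<alpha> + ?P2 \<alpha>) x = poly_eval m ?D ?P1 x + poly_eval m ?D ?P2 x"
      unfolding poly_eval_def by (simp add: distrib_right sum.distrib)
    then show ?thesis
      using f g poly_eval_mono_degree[of D1 ?D m P1 x] poly_eval_mono_degree[of D2 ?D m P2 x] by simp
  qed
  then show ?case by blast
next
  case (polyfun_mult f g)
  then obtain D1 P1 D2 P2 where f: "\<forall>x. f x = poly_eval m D1 P1 x" and g: "\<forall>x. g x = poly_eval m D2 P2 x"
    by blast
  obtain R where "\<forall>x. poly_eval m D1 P1 x * poly_eval m D2 P2 x = poly_eval m (D1 + D2) R x"
    using poly_eval_mult by blast
  then show ?case using f g by (intro exI[of _ "D1 + D2"] exI[of _ R]) simp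
qed

definition homogeneous :: "nat \<Rightarrow> ((nat \<Rightarrow> 'a::comm_ring_1) \<Rightarrow> 'a) \<Rightarrow> bool" where
  "homogeneous d f \<longleftrightarrow> (\<forall>c x. f (\<lambda>i. c * x i) = c ^ d * f x)"

lemma homogeneous_form_eval: "homogeneous d (form_eval m d c)"
  unfolding homogeneous_def form_eval_def
proof (intro allI)
  fix t :: 'a and x
  have "(\<Prod>i<m. (t * x i) ^ \<alpha> i) = t ^ d * (\<Prod>i<m. x i ^ \<alpha> i)" if "\<alpha> \<in> monoms m d" for \<alpha>
  proof -
    have "(\<Prod>i<m. t ^ \<alpha> i) = t ^ (\<Sum>i<m. \<alpha> i)" by (simp add: power_sum)
    also have "\<dots> = t ^ d" using that by (simp add: monoms_def)
    finally show ?thesis by (simp add: power_mult_distrib prod.distrib)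
  qed
  then show "(\<Sum>\<alpha>\<in>monoms m d. c \<alpha> * (\<Prod>i<m. (t * x i) ^ \<alpha> i)) =
      t ^ d * (\<Sum>\<alpha>\<in>monoms m d. c \<alpha> * (\<Prod>i<m. x i ^ \<alpha> i))"
    by (simp add: sum_distrib_left mult_ac)
qed

lemma poly_eval_eq_sum_form_eval: "poly_eval m D P x = (\<Sum>e\<le>D. form_eval m e P x)"
proof -
  have "monoms_le m D = (\<Union>e\<in>{..D}. monoms m e)"
    unfolding set_eq_iff by (simp add: monoms_le_def monoms_def)
  moreover have "\<forall>i\<in>{..D}. \<forall>j\<in>{..D}. i \<noteq> j \<longrightarrow> monoms m i \<inter> monoms m j = {}"
    by (simp add: monoms_def disjoint_iff)
  ultimately show ?thesis
    unfolding poly_eval_def form_eval_def by (simp add: sum.UNION_disjoint finite_monoms)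
qed

text \<open>A homogeneous polynomial function is the degree-\<open>d\<close> part of any polynomial representing it,
  as one sees by comparing coefficients of \<open>c\<close> in \<open>f (c x)\<close>.\<close>

lemma homogeneous_polyfun_imp_form_eval:
  fixes f :: "(nat \<Rightarrow> 'a::field_char_0) \<Rightarrow> 'a"
  assumes "polyfun m f" "homogeneous d f"
  shows "\<exists>G. \<forall>x. f x = form_eval m d G x"
proof -
  obtain D P where fP: "\<forall>x. f x = poly_eval m D P x"
    using polyfun_imp_poly_eval[OF assms(1)] by blast
  have "f x = (if d \<le> D then form_eval m d P x else 0)" for x
  proof -
    let ?R = "\<Sum>e\<le>D. monom (form_eval m e P x) e"
    have "poly ?R = poly (monom (f x) d)"
    proof
      fix c
      have "poly ?R c = (\<Sum>e\<le>D. form_eval m e P (\<lambda>i. c * x i))"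
        using homogeneous_form_eval[of e m P for e]
        by (simp add: poly_sum poly_monom homogeneous_def mult_ac)
      also have "\<dots> = f (\<lambda>i. c * x i)"
        using fP by (simp add: poly_eval_eq_sum_form_eval)
      also have "\<dots> = poly (monom (f x) d) c"
        using assms(2) by (simp add: homogeneous_def poly_monom mult_ac)
      finally show "poly ?R c = poly (monom (f x) d) c" .
    qed
    then have "coeff ?R d = f x"
      by (simp add: poly_eq_poly_eq_iff)
    moreover have "coeff ?R d = (if d \<le> D then form_eval m d P x else 0)"
      by (simp add: coeff_sum coeff_monom)
    ultimately show ?thesis by simp
  qed
  then have "\<forall>x. f x = form_eval m d (if d \<le> D then P else (\<lambda>_. 0)) x"
    by (simp add: form_eval_def)
  then show ?thesis by blast
qed

section \<open>Restriction to lines and directional derivatives\<close>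

lemma polyfun_restrict_line:
  assumes "polyfun m f"
    and "\<And>i. i < m \<Longrightarrow> polyfun k (\<lambda>a. x a i)" "\<And>i. i < m \<Longrightarrow> polyfun k (\<lambda>a. w a i)"
  shows "\<exists>Q. (\<forall>a t. poly (Q a) t = f (\<lambda>i. x a i + t * w a i)) \<and> (\<forall>j. polyfun k (\<lambda>a. coeff (Q a) j))"
  using assms(1)
proof induction
  case (polyfun_var i)
  have "polyfun k (\<lambda>a. coeff [:x a i, w a i:] j)" for j
  proof -
    consider "j = 0" | "j = 1" | "j > 1" by linarith
    then show ?thesis
    proof cases
      case 3
      then have "j = Suc (Suc (j - 2))" by simp
      then have "coeff [:x a i, w a i:] j = 0" for a by (metis coeff_pCons_Suc coeff_0)
      then show ?thesis by (simp add: polyfun_const)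
    qed (use assms(2,3)[OF polyfun_var] in simp_all)
  qed
  then show ?case by (intro exI[of _ "\<lambda>a. [:x a i, w a i:]"]) (simp add: algebra_simps)
next
  case (polyfun_const c)
  have "polyfun k (\<lambda>a. coeff [:c:] j)" for j
    by (cases j) (simp_all add: polyfun.polyfun_const)
  then show ?case by (intro exI[of _ "\<lambda>a. [:c:]"]) simp
next
  case (polyfun_add f g)
  then obtain Q1 Q2 where
    "(\<forall>a t. poly (Q1 a) t = f (\<lambda>i. x a i + t * w a i)) \<and> (\<forall>j. polyfun k (\<lambda>a. coeff (Q1 a) j))"
    "(\<forall>a t. poly (Q2 a) t = g (\<lambda>i. x a i + t * w a i)) \<and> (\<forall>j. polyfun k (\<lambda>a. coeff (Q2 a) j))"
    by blast
  then show ?case by (intro exI[of _ "\<lambda>a. Q1 a + Q2 a"]) (simp add: polyfun.polyfun_add)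
next
  case (polyfun_mult f g)
  then obtain Q1 Q2 where Q1:
    "(\<forall>a t. poly (Q1 a) t = f (\<lambda>i. x a i + t * w a i)) \<and> (\<forall>j. polyfun k (\<lambda>a. coeff (Q1 a) j))"
    and Q2:
    "(\<forall>a t. poly (Q2 a) t = g (\<lambda>i. x a i + t * w a i)) \<and> (\<forall>j. polyfun k (\<lambda>a. coeff (Q2 a) j))"
    by blast
  have "polyfun k (\<lambda>a. coeff (Q1 a * Q2 a) j)" for j
    unfolding coeff_mult using Q1 Q2 by (intro polyfun_sum polyfun.polyfun_mult) auto
  then show ?case using Q1 Q2 by (intro exI[of _ "\<lambda>a. Q1 a * Q2 a"]) simp
qed

text \<open>Junk unless \<open>f\<close> is a polynomial function, whose restriction to a line is a unique polynomial.\<close>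

definition line_poly :: "((nat \<Rightarrow> 'a::field_char_0) \<Rightarrow> 'a) \<Rightarrow> (nat \<Rightarrow> 'a) \<Rightarrow> (nat \<Rightarrow> 'a) \<Rightarrow> 'a poly" where
  "line_poly f x w = (THE Q. \<forall>t. poly Q t = f (\<lambda>i. x i + t * w i))"

lemma line_poly_eqI: "(\<And>t. poly Q t = f (\<lambda>i. x i + t * w i)) \<Longrightarrow> line_poly f x w = Q"
  unfolding line_poly_def by (rule the_equality) (auto simp flip: poly_eq_poly_eq_iff)

lemma poly_line_poly:
  assumes "polyfun m f"
  shows "poly (line_poly f x w) t = f (\<lambda>i. x i + t * w i)"
proof -
  obtain Q where "\<forall>a t. poly (Q a) t = f (\<lambda>i. x i + t * w i)"
    using polyfun_restrict_line[of m f 0 "\<lambda>_. x" "\<lambda>_. w", OF assms polyfun_const polyfun_const]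
    by blast
  then show ?thesis using line_poly_eqI by metis
qed

lemma polyfun_coeff_line_poly:
  assumes "polyfun m f"
  shows "polyfun m (\<lambda>y. coeff (line_poly f y q) k)"
proof -
  obtain Q where Q: "\<forall>a t. poly (Q a) t = f (\<lambda>i. a i + t * q i)" "\<forall>j. polyfun m (\<lambda>a. coeff (Q a) j)"
    using polyfun_restrict_line[of m f m "\<lambda>a. a" "\<lambda>a. q", OF assms polyfun_var polyfun_const]
    by blast
  have "line_poly f y q = Q y" for y
    by (rule line_poly_eqI) (simp add: Q(1))
  then show ?thesis using Q(2) by simp
qed

lemma exists_nonroot_on_line:
  fixes f :: "(nat \<Rightarrow> 'a::field_char_0) \<Rightarrow> 'a"
  assumes "polyfun m f" "f y \<noteq> c"
  shows "\<exists>s. s \<noteq> 0 \<and> f (\<lambda>i. y i + s * u i) \<noteq> c"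
proof (rule ccontr)
  assume "\<not> ?thesis"
  then have roots: "UNIV - {0} \<subseteq> {s. poly (line_poly f y u - [:c:]) s = 0}"
    using poly_line_poly[OF assms(1)] by auto
  have "poly (line_poly f y u - [:c:]) 0 \<noteq> 0"
    using assms poly_line_poly[OF assms(1), of y u 0] by simp
  then have "finite {s. poly (line_poly f y u - [:c:]) s = 0}"
    by (intro poly_roots_finite) auto
  then have "finite (UNIV - {0::'a})"
    using roots finite_subset by blast
  then show False
    using infinite_UNIV_char_0[where 'a='a] by simp
qed

definition dir_deriv :: "((nat \<Rightarrow> 'a::field_char_0) \<Rightarrow> 'a) \<Rightarrow> (nat \<Rightarrow> 'a) \<Rightarrow> (nat \<Rightarrow> 'a) \<Rightarrow> 'a" where
  "dir_deriv f x w = coeff (line_poly f x w) 1"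

lemma linear_functional_dir_deriv:
  fixes f :: "(nat \<Rightarrow> 'a::field_char_0) \<Rightarrow> 'a"
  assumes "polyfun m f"
  shows "linear_functional (dir_deriv f x)"
  using assms unfolding linear_functional_def
proof (induction rule: polyfun.induct)
  case (polyfun_var i)
  have "line_poly (\<lambda>x. x i) x v = [:x i, v i:]" for v by (rule line_poly_eqI) simp
  then show ?case by (simp add: dir_deriv_def)
next
  case (polyfun_const c)
  have "line_poly (\<lambda>x. c) x v = [:c:]" for v by (rule line_poly_eqI) simp
  then show ?case by (simp add: dir_deriv_def)
next
  case (polyfun_add f g)
  have "line_poly (\<lambda>x. f x + g x) x v = line_poly f x v + line_poly g x v" for v
    by (rule line_poly_eqI) (simp add: poly_line_poly[OF polyfun_add.hyps(1)] poly_line_poly[OF polyfun_add.hyps(2)])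
  then show ?case using polyfun_add.IH by (simp add: dir_deriv_def algebra_simps)
next
  case (polyfun_mult f g)
  have "coeff (line_poly h x v) 0 = h x" if "polyfun m h" for h v
    using poly_line_poly[OF that, of x v 0] by (simp add: poly_0_coeff_0)
  moreover have "line_poly (\<lambda>x. f x * g x) x v = line_poly f x v * line_poly g x v" for v
    by (rule line_poly_eqI) (simp add: poly_line_poly[OF polyfun_mult.hyps(1)] poly_line_poly[OF polyfun_mult.hyps(2)])
  ultimately have "dir_deriv (\<lambda>x. f x * g x) x v = f x * dir_deriv g x v + dir_deriv f x v * g x" for v
    using polyfun_mult.hyps by (simp add: dir_deriv_def coeff_mult)
  then show ?case using polyfun_mult.IH by (simp add: algebra_simps)
qed

lemma dir_deriv_eq_0_if_invariant:
  fixes f :: "(nat \<Rightarrow> 'a::field_char_0) \<Rightarrow> 'a"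
  assumes "\<And>t. f (\<lambda>i. x i + t * w i) = f x"
  shows "dir_deriv f x w = 0"
proof -
  have "line_poly f x w = [:f x:]" by (rule line_poly_eqI) (simp add: assms)
  then show ?thesis by (simp add: dir_deriv_def)
qed

lemma coeff_1_pcompose_shift: "coeff (p \<circ>\<^sub>p [:a, 1:]) 1 = poly (pderiv p) (a :: 'a::idom)"
proof (induction p)
  case (pCons b p)
  have "[:a, 1:] * (p \<circ>\<^sub>p [:a, 1:]) = Polynomial.smult a (p \<circ>\<^sub>p [:a, 1:]) + pCons 0 (p \<circ>\<^sub>p [:a, 1:])"
    by (simp add: mult_pCons_left)
  then have "coeff (pCons b p \<circ>\<^sub>p [:a, 1:]) 1 = a * coeff (p \<circ>\<^sub>p [:a, 1:]) 1 + coeff (p \<circ>\<^sub>p [:a, 1:]) 0"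
    by (simp add: pcompose_pCons)
  then show ?case using pCons by (simp add: coeff_pcompose_0 pderiv_pCons algebra_simps)
qed simp

text \<open>The directional derivative at \<open>x + t\<^sub>0 w\<close> is the derivative at \<open>t\<^sub>0\<close> of the line polynomial,
  so if it vanishes along the whole line the line polynomial is constant.\<close>

lemma invariant_if_dir_deriv_eq_0:
  fixes f :: "(nat \<Rightarrow> 'a::field_char_0) \<Rightarrow> 'a"
  assumes "polyfun m f" "\<And>t\<^sub>0. dir_deriv f (\<lambda>i. x i + t\<^sub>0 * w i) w = 0"
  shows "f (\<lambda>i. x i + t * w i) = f x"
proof -
  let ?Q = "line_poly f x w"
  have "poly (pderiv ?Q) t\<^sub>0 = 0" for t\<^sub>0
  proof -
    have "line_poly f (\<lambda>i. x i + t\<^sub>0 * w i) w = ?Q \<circ>\<^sub>p [:t\<^sub>0, 1:]"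
    proof (rule line_poly_eqI)
      fix t
      have "(\<lambda>i. x i + (t\<^sub>0 + t) * w i) = (\<lambda>i. x i + t\<^sub>0 * w i + t * w i)"
        by (simp add: algebra_simps)
      then show "poly (?Q \<circ>\<^sub>p [:t\<^sub>0, 1:]) t = f (\<lambda>i. x i + t\<^sub>0 * w i + t * w i)"
        by (simp add: poly_pcompose poly_line_poly[OF assms(1)])
    qed
    then show ?thesis
      using assms(2)[of t\<^sub>0] coeff_1_pcompose_shift[of ?Q t\<^sub>0] by (simp add: dir_deriv_def)
  qed
  then have "degree ?Q = 0"
    using poly_all_0_iff_0 pderiv_eq_0_iff by blast
  then obtain c where "?Q = [:c:]" by (rule degree_eq_zeroE)
  then have "poly ?Q t = poly ?Q 0" by simp
  then show ?thesis by (simp add: poly_line_poly[OF assms(1)])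
qed

lemma exists_dir_deriv_nonzero_on_line:
  fixes f :: "(nat \<Rightarrow> 'a::field_char_0) \<Rightarrow> 'a"
  assumes "polyfun m f" "f q \<noteq> f (\<lambda>_. 0)"
  shows "\<exists>s. dir_deriv f (\<lambda>i. s * q i) q \<noteq> 0"
  using invariant_if_dir_deriv_eq_0[OF assms(1), of "\<lambda>_. 0" q 1] assms(2) by auto

section \<open>Vertex-free hyperplane sections\<close>

text \<open>Invariance of \<open>f\<close> along \<open>w\<close> makes \<open>w\<close> a vertex of the cone \<open>{f = 0}\<close>.\<close>

definition vertex_free :: "((nat \<Rightarrow> 'a::field_char_0) \<Rightarrow> 'a) set \<Rightarrow> (nat \<Rightarrow> 'a) set \<Rightarrow> bool" where
  "vertex_free T S \<longleftrightarrow> (\<forall>w\<in>S. w \<noteq> (\<lambda>_. 0) \<longrightarrow> (\<exists>f\<in>T. \<exists>x\<in>S. \<exists>t. f (\<lambda>i. x i + t * w i) \<noteq> f x))"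

definition line_coeffs ::
  "((nat \<Rightarrow> 'a::field_char_0) \<Rightarrow> 'a) set \<Rightarrow> (nat \<Rightarrow> 'a) \<Rightarrow> ((nat \<Rightarrow> 'a) \<Rightarrow> 'a) set" where
  "line_coeffs T q = {(\<lambda>y. coeff (line_poly g y q) k) | g k. g \<in> T}"

lemma vertex_free_line_coeffs:
  assumes T: "\<forall>f\<in>T. \<exists>N. polyfun N f" and vf: "vertex_free T S"
    and S: "lin_subspace S" "q \<in> S" and l: "linear_functional l" "l q \<noteq> 0"
  shows "vertex_free (line_coeffs T q) {x \<in> S. l x = 0}"
  unfolding vertex_free_def
proof (intro ballI impI)
  fix w assume w: "w \<in> {x \<in> S. l x = 0}" "w \<noteq> (\<lambda>_. 0)"
  obtain g y t where g: "g \<in> T" "y \<in> S" "g (\<lambda>i. y i + t * w i) \<noteq> g y"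
    using vf w unfolding vertex_free_def by blast
  obtain N where g_poly: "polyfun N g" using T g(1) by blast
  define s where "s = l y / l q"
  define x where "x = (\<lambda>i. y i - s * q i)"
  have "l x = 0"
    unfolding x_def s_def linear_functional_diff[OF l(1)] using l(2) by simp
  then have x: "x \<in> {x \<in> S. l x = 0}"
    unfolding x_def using lin_subspace_diff[OF S(1) g(2) S(2)] by simp
  show "\<exists>g'\<in>line_coeffs T q. \<exists>x\<in>{x \<in> S. l x = 0}. \<exists>t. g' (\<lambda>i. x i + t * w i) \<noteq> g' x"
  proof (rule ccontr)
    assume "\<not> ?thesis"
    then have inv: "\<And>g'. g' \<in> line_coeffs T q \<Longrightarrow> g' (\<lambda>i. x i + t * w i) = g' x"
      using x by blast
    have "coeff (line_poly g (\<lambda>i. x i + t * w i) q) k = coeff (line_poly g x q) k" for k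
      using inv[of "\<lambda>y. coeff (line_poly g y q) k"] g(1) unfolding line_coeffs_def by blast
    then have "line_poly g (\<lambda>i. x i + t * w i) q = line_poly g x q"
      by (simp add: poly_eq_iff)
    then have "g (\<lambda>i. x i + t * w i + s * q i) = g (\<lambda>i. x i + s * q i)"
      by (metis poly_line_poly[OF g_poly])
    moreover have "(\<lambda>i. x i + t * w i + s * q i) = (\<lambda>i. y i + t * w i)" "(\<lambda>i. x i + s * q i) = y"
      by (auto simp: x_def)
    ultimately show False using g(3) by simp
  qed
qed

text \<open>The functional \<open>\<mu>\<close> extends \<open>\<mu>'\<close> from \<open>l = 0\<close> by \<open>\<mu> q = 0\<close>.  A common vertex \<open>w\<close> of \<open>T\<close> on \<open>\<mu> = 0\<close>
  satisfies \<open>l w = 0\<close>, because \<open>l\<close> is a derivative of some \<open>f \<in> T\<close> at a point of the line \<open>\<real>q\<close>; and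
  translating along \<open>w\<close> commutes with moving along \<open>q\<close>, so \<open>w\<close> would be a common vertex of the
  coefficient functions.\<close>

lemma vertex_free_lift:
  assumes T: "\<forall>f\<in>T. \<exists>N. polyfun N f" and S: "lin_subspace S" "q \<in> S"
    and f: "f \<in> T" and l: "l = dir_deriv f (\<lambda>i. s * q i)" "linear_functional l" "l q \<noteq> 0"
    and \<mu>': "linear_functional \<mu>'" "vertex_free (line_coeffs T q) {x \<in> {x \<in> S. l x = 0}. \<mu>' x = 0}"
  defines "\<mu> \<equiv> \<lambda>x. \<mu>' x - l x / l q * \<mu>' q"
  shows "vertex_free T {x \<in> S. \<mu> x = 0}"
  unfolding vertex_free_def
proof (intro ballI impI)
  fix w assume w: "w \<in> {x \<in> S. \<mu> x = 0}" "w \<noteq> (\<lambda>_. 0)"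
  show "\<exists>g\<in>T. \<exists>x\<in>{x \<in> S. \<mu> x = 0}. \<exists>t. g (\<lambda>i. x i + t * w i) \<noteq> g x"
  proof (rule ccontr)
    assume "\<not> ?thesis"
    then have inv: "\<And>g x t. g \<in> T \<Longrightarrow> x \<in> S \<Longrightarrow> \<mu> x = 0 \<Longrightarrow> g (\<lambda>i. x i + t * w i) = g x"
      by blast
    have \<mu>_line: "\<mu> (\<lambda>i. x i + s' * q i) = \<mu> x" for x s'
      using l(3) unfolding \<mu>_def
      by (simp add: linear_functional_lincomb[OF \<mu>'(1), of 1 _ s', simplified]
          linear_functional_lincomb[OF l(2), of 1 _ s', simplified] field_simps)
    have "(\<lambda>i. 0 + s * q i) \<in> S" "\<mu> (\<lambda>i. 0 + s * q i) = 0"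
      using lin_subspace_lincomb[OF S(1) S(2) S(2), of 0 s] \<mu>_line[of "\<lambda>_. 0" s]
        linear_functional_zero[OF \<mu>'(1)] linear_functional_zero[OF l(2)]
      by (simp_all add: \<mu>_def)
    then have "l w = 0"
      unfolding l(1) using inv[OF f] by (intro dir_deriv_eq_0_if_invariant) simp
    then obtain g' x t where g': "g' \<in> line_coeffs T q" "x \<in> S" "l x = 0" "\<mu>' x = 0"
      "g' (\<lambda>i. x i + t * w i) \<noteq> g' x"
      using \<mu>'(2) w unfolding vertex_free_def \<mu>_def by auto
    obtain g k where g: "g \<in> T" "g' = (\<lambda>y. coeff (line_poly g y q) k)"
      using g'(1) unfolding line_coeffs_def by blast
    obtain N where g_poly: "polyfun N g" using T g(1) by blast
    have "line_poly g (\<lambda>i. x i + t * w i) q = line_poly g x q"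
    proof (rule line_poly_eqI)
      fix s'
      have "(\<lambda>i. x i + s' * q i) \<in> S"
        using lin_subspace_lincomb[OF S(1) g'(2) S(2), of 1 s'] by simp
      moreover have "\<mu> (\<lambda>i. x i + s' * q i) = 0"
        using \<mu>_line g'(3,4) by (simp add: \<mu>_def)
      moreover have "(\<lambda>i. x i + t * w i + s' * q i) = (\<lambda>i. x i + s' * q i + t * w i)"
        by (simp add: algebra_simps)
      ultimately show "poly (line_poly g x q) s' = g (\<lambda>i. x i + t * w i + s' * q i)"
        using inv[OF g(1)] poly_line_poly[OF g_poly] by simp
    qed
    then show False using g'(5) g(2) by simp
  qed
qed

lemma collinear_if_vertex_free:
  assumes T: "\<forall>f\<in>T. \<exists>N. polyfun N f" and vf: "vertex_free T S" and S: "lin_subspace S"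
    and coll: "\<forall>f\<in>T. \<forall>q\<in>S. f q \<noteq> f (\<lambda>_. 0) \<longrightarrow> (\<exists>c. q = (\<lambda>i. c * p i))"
    and u: "u \<in> S"
  shows "\<exists>c. u = (\<lambda>i. c * p i)"
proof (cases "u = (\<lambda>_. 0)")
  case True
  then show ?thesis by (intro exI[of _ 0]) simp
next
  case False
  obtain f x t where f: "f \<in> T" "x \<in> S" "f (\<lambda>i. x i + t * u i) \<noteq> f x"
    using vf u False unfolding vertex_free_def by blast
  obtain N where f_poly: "polyfun N f" using T f(1) by blast
  have "(\<lambda>i. x i + t * u i) \<in> S"
    using lin_subspace_lincomb[OF S f(2) u, of 1 t] by simp
  then obtain y where y: "y \<in> S" "f y \<noteq> f (\<lambda>_. 0)"
    using f by (cases "f x = f (\<lambda>_. 0)") auto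
  obtain c0 where c0: "y = (\<lambda>i. c0 * p i)"
    using coll f(1) y by blast
  obtain s where s: "s \<noteq> 0" "f (\<lambda>i. y i + s * u i) \<noteq> f (\<lambda>_. 0)"
    using exists_nonroot_on_line[OF f_poly y(2)] by blast
  have "(\<lambda>i. y i + s * u i) \<in> S"
    using lin_subspace_lincomb[OF S y(1) u, of 1 s] by simp
  then obtain c1 where c1: "(\<lambda>i. y i + s * u i) = (\<lambda>i. c1 * p i)"
    using coll f(1) s by blast
  have "u = (\<lambda>i. (c1 - c0) / s * p i)"
  proof
    fix i
    have "y i + s * u i = c1 * p i" using fun_cong[OF c1, of i] by simp
    then show "u i = (c1 - c0) / s * p i" using c0 s(1) by (simp add: field_simps)
  qed
  then show ?thesis by blast
qed

text \<open>Either every vector of the span on which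
  some \<open>f \<in> T\<close> differs from its value at \<open>0\<close> is a multiple of \<open>p\<close>, and then the span is the line
  through \<open>p\<close>; or there is such a \<open>q\<close> independent of \<open>p\<close>, and one passes to the hyperplane
  \<open>l = 0\<close> (where \<open>l\<close> is a derivative of \<open>f\<close> with \<open>l q \<noteq> 0\<close>) and to the coefficient functions of
  \<open>T\<close> along \<open>q\<close>.\<close>

lemma exists_vertex_free_hyperplane:
  assumes "finite B" "\<forall>f\<in>T. \<exists>N. polyfun N f" "vertex_free T (lin_span B)"
    and "p \<in> lin_span B" "p \<noteq> (\<lambda>_. 0)"
  shows "\<exists>\<mu>. linear_functional \<mu> \<and> \<mu> p \<noteq> 0 \<and> vertex_free T {x \<in> lin_span B. \<mu> x = 0}"
  using assms
proof (induction "card B" arbitrary: B T p rule: less_induct)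
  case less
  note S = lin_subspace_lin_span[of B]
  show ?case
  proof (cases "\<forall>f\<in>T. \<forall>q\<in>lin_span B. f q \<noteq> f (\<lambda>_. 0) \<longrightarrow> (\<exists>c. q = (\<lambda>i. c * p i))")
    case True
    obtain i0 where i0: "p i0 \<noteq> 0" using less.prems(5) by auto
    have "vertex_free T {x \<in> lin_span B. x i0 = 0}"
      unfolding vertex_free_def
    proof (intro ballI impI)
      fix w assume w: "w \<in> {x \<in> lin_span B. x i0 = 0}" "w \<noteq> (\<lambda>_. 0)"
      obtain c where "w = (\<lambda>i. c * p i)"
        using collinear_if_vertex_free[OF less.prems(2,3) S True] w(1) by blast
      with w i0 show "\<exists>f\<in>T. \<exists>x\<in>{x \<in> lin_span B. x i0 = 0}. \<exists>t. f (\<lambda>i. x i + t * w i) \<noteq> f x"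
        by simp
    qed
    moreover have "linear_functional (\<lambda>x. x i0)"
      by (simp add: linear_functional_def)
    ultimately show ?thesis using i0 by blast
  next
    case False
    then obtain f q where f: "f \<in> T" and q: "q \<in> lin_span B" "f q \<noteq> f (\<lambda>_. 0)"
      and q_indep: "\<forall>c. q \<noteq> (\<lambda>i. c * p i)"
      by blast
    obtain N where f_poly: "polyfun N f" using less.prems(2) f by blast
    obtain s where lq: "dir_deriv f (\<lambda>i. s * q i) q \<noteq> 0"
      using exists_dir_deriv_nonzero_on_line[OF f_poly q(2)] by blast
    define l where "l = dir_deriv f (\<lambda>i. s * q i)"
    have l: "linear_functional l" "l q \<noteq> 0"
      using linear_functional_dir_deriv[OF f_poly] lq by (simp_all add: l_def)
    obtain B' where B': "finite B'" "card B' < card B" "lin_span B' = {x \<in> lin_span B. l x = 0}"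
      using lin_span_kernel_smaller[OF l(1) less.prems(1) q(1) l(2)] by blast
    define p' where "p' = (\<lambda>i. p i - l p / l q * q i)"
    have "l p' = 0"
      unfolding p'_def linear_functional_diff[OF l(1)] using l(2) by simp
    moreover have "p' \<in> lin_span B"
      unfolding p'_def by (rule lin_subspace_diff[OF S less.prems(4) q(1)])
    ultimately have p': "p' \<in> lin_span B'"
      unfolding B'(3) by simp
    have "p' \<noteq> (\<lambda>_. 0)"
    proof
      assume "p' = (\<lambda>_. 0)"
      then have p_eq: "p = (\<lambda>i. l p / l q * q i)" by (auto simp: p'_def fun_eq_iff)
      then have "l p \<noteq> 0" using less.prems(5) by force
      then have "q = (\<lambda>i. l q / l p * p i)" using l(2) by (subst p_eq) (auto simp: fun_eq_iff)
      then show False using q_indep by blast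
    qed
    moreover have "\<forall>g\<in>line_coeffs T q. \<exists>N. polyfun N g"
      using less.prems(2) polyfun_coeff_line_poly unfolding line_coeffs_def by blast
    moreover have "vertex_free (line_coeffs T q) (lin_span B')"
      unfolding B'(3) by (rule vertex_free_line_coeffs[OF less.prems(2,3) S q(1) l])
    ultimately obtain \<mu>' where \<mu>': "linear_functional \<mu>'" "\<mu>' p' \<noteq> 0"
      "vertex_free (line_coeffs T q) {x \<in> lin_span B'. \<mu>' x = 0}"
      using less.hyps[OF B'(2) B'(1)] p' by blast
    define \<mu> where "\<mu> x = \<mu>' x - l x / l q * \<mu>' q" for x
    have "linear_functional \<mu>"
      using \<mu>'(1) l(1) unfolding linear_functional_def \<mu>_def
      by (simp add: algebra_simps add_divide_distrib)
    moreover have "\<mu> p \<noteq> 0"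
      using \<mu>'(2) unfolding \<mu>_def p'_def linear_functional_diff[OF \<mu>'(1)] by (simp add: mult.commute)
    moreover have "vertex_free T {x \<in> lin_span B. \<mu> x = 0}"
      unfolding \<mu>_def using \<mu>'(3) B'(3)
      by (intro vertex_free_lift[OF less.prems(2) S q(1) f l_def l \<mu>'(1)]) simp
    ultimately show ?thesis by blast
  qed
qed

section \<open>Vertices and conciseness\<close>

definition coord_space :: "nat \<Rightarrow> (nat \<Rightarrow> 'a::zero) set" where
  "coord_space n = {x. \<forall>i\<ge>n. x i = 0}"

definition std_basis :: "nat \<Rightarrow> nat \<Rightarrow> 'a::zero_neq_one" where
  "std_basis j = (\<lambda>i. if i = j then 1 else 0)"

lemma coord_space_nonzero_index: "x \<in> coord_space n \<Longrightarrow> x i \<noteq> 0 \<Longrightarrow> i < n"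
  by (rule ccontr) (simp add: coord_space_def)

lemma sum_std_basis: "(\<Sum>j<n. c j * (std_basis j i :: 'a::comm_ring_1)) = (if i < n then c i else 0)"
proof -
  have "(\<Sum>j<n. c j * (std_basis j i :: 'a)) = (\<Sum>j<n. if j = i then c j else 0)"
    by (intro sum.cong) (auto simp: std_basis_def)
  then show ?thesis by (simp add: sum.delta')
qed

lemma coord_space_expand:
  "x \<in> coord_space n \<Longrightarrow> (\<lambda>i. \<Sum>j<n. x j * std_basis j i) = (x :: nat \<Rightarrow> 'a::comm_ring_1)"
  by (rule ext) (simp add: sum_std_basis coord_space_def)

lemma lin_span_std_basis: "lin_span ((std_basis :: nat \<Rightarrow> nat \<Rightarrow> 'a::field) ` {..<n}) = coord_space n"
proof
  show "lin_span (std_basis ` {..<n}) \<subseteq> (coord_space n :: (nat \<Rightarrow> 'a) set)"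
    by (rule lin_span_subset) (auto simp: lin_subspace_def coord_space_def std_basis_def)
next
  have inj: "inj_on (std_basis :: nat \<Rightarrow> nat \<Rightarrow> 'a) A" for A
    unfolding inj_on_def std_basis_def by (metis one_neq_zero)
  show "coord_space n \<subseteq> lin_span ((std_basis :: nat \<Rightarrow> nat \<Rightarrow> 'a) ` {..<n})"
  proof
    fix x :: "nat \<Rightarrow> 'a" assume x: "x \<in> coord_space n"
    let ?c = "\<lambda>v :: nat \<Rightarrow> 'a. x (inv_into {..<n} std_basis v)"
    have "(\<lambda>i. \<Sum>v\<in>std_basis ` {..<n}. ?c v * v i) = (\<lambda>i. \<Sum>j<n. ?c (std_basis j) * std_basis j i)"
      by (subst sum.reindex[OF inj]) simp
    also have "\<dots> = x"
      using coord_space_expand[OF x] by (simp add: inv_into_f_f[OF inj])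
    finally show "x \<in> lin_span (std_basis ` {..<n})"
      unfolding lin_span_def mem_Collect_eq by (intro exI[of _ ?c]) (rule sym)
  qed
qed

lemma linear_functional_coord_space:
  "linear_functional \<mu> \<Longrightarrow> x \<in> coord_space n \<Longrightarrow> \<mu> x = (\<Sum>j<n. x j * \<mu> (std_basis j))"
  using linear_functional_sum[of \<mu> "{..<n}" x std_basis] coord_space_expand[of x n] by simp

lemma not_concise_fn_if_factors:
  fixes f :: "(nat \<Rightarrow> 'a::field_char_0) \<Rightarrow> 'a"
  assumes "m < n" "polyfun m g" "homogeneous d g" "\<And>x. f x = g (\<lambda>j. \<Sum>i<n. L j i * x i)"
  shows "\<not> concise_fn n d f"
proof -
  obtain G where "\<forall>z. g z = form_eval m d G z"
    using homogeneous_polyfun_imp_form_eval[OF assms(2,3)] by blast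
  then show ?thesis
    using assms(1,4) unfolding concise_fn_def by auto
qed

text \<open>If \<open>F\<close> is invariant along \<open>w\<close> with \<open>w\<^sub>k \<noteq> 0\<close>, then \<open>F x = F (x - (x\<^sub>k / w\<^sub>k) w)\<close>, and the argument
  on the right has \<open>k\<close>-th coordinate \<open>0\<close>: \<open>F\<close> is a form in the \<open>n - 1\<close> linear forms
  \<open>x\<^sub>j - (w\<^sub>j / w\<^sub>k) x\<^sub>k\<close>, \<open>j \<noteq> k\<close>.\<close>

lemma not_concise_if_invariant:
  fixes F :: "(nat \<Rightarrow> nat) \<Rightarrow> 'a::field_char_0"
  assumes w: "w \<in> coord_space n" "w k \<noteq> 0"
    and inv: "\<And>x t. x \<in> coord_space n \<Longrightarrow> form_eval n d F (\<lambda>i. x i + t * w i) = form_eval n d F x"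
  shows "\<not> concise n d F"
proof -
  let ?F = "form_eval n d F"
  have k: "k < n" using coord_space_nonzero_index[OF w] .
  define A where "A x = (\<lambda>i. x i - x k / w k * w i)" for x
  have F_A: "?F x = ?F (A x)" for x
  proof -
    define y where "y = (\<lambda>i. if i < n then x i else 0)"
    have "y \<in> coord_space n" by (simp add: y_def coord_space_def)
    have "?F x = ?F y"
      by (rule polyfun_cong[OF polyfun_form_eval]) (simp add: y_def)
    also have "\<dots> = ?F (\<lambda>i. y i + (- (x k / w k)) * w i)"
      by (rule inv[OF \<open>y \<in> coord_space n\<close>, symmetric])
    also have "\<dots> = ?F (A x)"
      using k by (intro polyfun_cong[OF polyfun_form_eval]) (simp add: y_def A_def)
    finally show ?thesis .
  qed
  define \<sigma> where "\<sigma> j = (if j < k then j else Suc j)" for j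
  define ins where "ins z = (\<lambda>i. if i < k then z i else if i = k then 0 else z (i - 1))" for z :: "nat \<Rightarrow> 'a"
  define L where "L j i = (if i = \<sigma> j then 1 else 0) - (if i = k then w (\<sigma> j) / w k else 0)" for j i
  have "polyfun (n - 1) (\<lambda>z. ?F (ins z))"
    unfolding ins_def
  proof (rule polyfun_compose[OF polyfun_form_eval])
    fix i assume "i < n"
    then show "polyfun (n - 1) (\<lambda>z. if i < k then z i else if i = k then 0 else z (i - 1))"
      using k by (cases "i < k"; cases "i = k") (simp_all add: polyfun_var polyfun_const)
  qed
  moreover have "homogeneous d (\<lambda>z. ?F (ins z))"
  proof -
    have "ins (\<lambda>i. c * z i) = (\<lambda>i. c * ins z i)" for c z
      by (auto simp: ins_def)
    then show ?thesis
      using homogeneous_form_eval[of d n F] by (simp add: homogeneous_def)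
  qed
  moreover have "?F x = ?F (ins (\<lambda>j. \<Sum>i<n. L j i * x i))" for x
  proof -
    have L_x: "(\<Sum>i<n. L j i * x i) = A x (\<sigma> j)" if "j < n - 1" for j
    proof -
      have "\<sigma> j < n" using that k by (auto simp: \<sigma>_def)
      have "(\<Sum>i<n. L j i * x i) =
          (\<Sum>i<n. if i = \<sigma> j then x i else 0) - (\<Sum>i<n. if i = k then w (\<sigma> j) / w k * x i else 0)"
        unfolding sum_subtractf[symmetric] by (intro sum.cong refl) (simp add: L_def)
      also have "\<dots> = A x (\<sigma> j)"
        using \<open>\<sigma> j < n\<close> k by (simp add: A_def)
      finally show ?thesis .
    qed
    have "?F (ins (\<lambda>j. \<Sum>i<n. L j i * x i)) = ?F (ins (\<lambda>j. A x (\<sigma> j)))"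
      using k by (intro polyfun_cong[OF polyfun_form_eval]) (auto simp: ins_def L_x)
    also have "\<dots> = ?F (A x)"
      using w(2) by (intro polyfun_cong[OF polyfun_form_eval]) (auto simp: ins_def \<sigma>_def A_def)
    finally show ?thesis using F_A by simp
  qed
  ultimately show ?thesis
    unfolding concise_def using k by (intro not_concise_fn_if_factors[of "n - 1"]) auto
qed

lemma concise_imp_vertex_free:
  fixes F :: "(nat \<Rightarrow> nat) \<Rightarrow> 'a::field_char_0"
  assumes "concise n d F"
  shows "vertex_free {form_eval n d F} (coord_space n)"
  unfolding vertex_free_def
proof (intro ballI impI)
  fix w :: "nat \<Rightarrow> 'a" assume w: "w \<in> coord_space n" "w \<noteq> (\<lambda>_. 0)"
  then obtain k where "w k \<noteq> 0" by auto
  then show "\<exists>f\<in>{form_eval n d F}. \<exists>x\<in>coord_space n. \<exists>t. f (\<lambda>i. x i + t * w i) \<noteq> f x"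
    using not_concise_if_invariant[OF w(1)] assms by blast
qed

lemma exists_vertex_free_hyperplane_transversal:
  fixes F :: "(nat \<Rightarrow> nat) \<Rightarrow> 'a::field_char_0"
  assumes n: "n \<ge> 1" and "concise n d F"
  shows "\<exists>\<mu>. linear_functional \<mu> \<and> \<mu> (std_basis (n - 1)) \<noteq> 0 \<and>
    vertex_free {form_eval n d F} {x \<in> coord_space n. \<mu> x = 0}"
proof -
  let ?e = "std_basis (n - 1) :: nat \<Rightarrow> 'a"
  have e: "?e \<in> lin_span (std_basis ` {..<n})" "?e \<noteq> (\<lambda>_. 0)"
    using n by (intro in_lin_span) (auto simp: std_basis_def fun_eq_iff)
  have T: "\<forall>f\<in>{form_eval n d F}. \<exists>N. polyfun N f"
    using polyfun_form_eval by blast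
  have vf: "vertex_free {form_eval n d F} (lin_span (std_basis ` {..<n}))"
    using concise_imp_vertex_free[OF assms(2)] by (simp add: lin_span_std_basis)
  show ?thesis
    using exists_vertex_free_hyperplane[OF finite_imageI[OF finite_lessThan] T vf e]
    unfolding lin_span_std_basis .
qed

section \<open>Substituting for the last variable\<close>

definition graph_embed :: "(nat \<Rightarrow> 'a::comm_ring_1) \<Rightarrow> nat \<Rightarrow> (nat \<Rightarrow> 'a) \<Rightarrow> nat \<Rightarrow> 'a" where
  "graph_embed a m x = (\<lambda>i. if i < m then x i else if i = m then (\<Sum>l<m. a l * x l) else 0)"

lemma subst_last_eq_graph_embed:
  "n \<ge> 1 \<Longrightarrow> subst_last n d F a x = form_eval n d F (graph_embed a (n - 1) x)"
  unfolding subst_last_def graph_embed_def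
  by (rule polyfun_cong[OF polyfun_form_eval]) auto

lemma graph_embed_in_coord_space: "graph_embed a m x \<in> coord_space (Suc m)"
  by (simp add: graph_embed_def coord_space_def)

lemma graph_embed_lincomb:
  "graph_embed a m (\<lambda>i. x i + t * w i) = (\<lambda>i. graph_embed a m x i + t * graph_embed a m w i)"
  by (rule ext) (simp add: graph_embed_def sum.distrib sum_distrib_left algebra_simps)

text \<open>A hyperplane \<open>\<mu> = 0\<close> not containing the last basis vector is the graph of
  \<open>x\<^sub>m = \<Sum>\<^sub>l a\<^sub>l x\<^sub>l\<close>.\<close>

lemma graph_embed_kernel:
  fixes \<mu> :: "(nat \<Rightarrow> 'a::field) \<Rightarrow> 'a"
  assumes \<mu>: "linear_functional \<mu>" "\<mu> (std_basis m) \<noteq> 0"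
  defines "a \<equiv> \<lambda>i. - \<mu> (std_basis i) / \<mu> (std_basis m)"
  shows "\<mu> (graph_embed a m x) = 0"
    and "x \<in> coord_space (Suc m) \<Longrightarrow> \<mu> x = 0 \<Longrightarrow> graph_embed a m x = x"
proof -
  have \<mu>_x: "\<mu> x = (\<Sum>j<m. x j * \<mu> (std_basis j)) + x m * \<mu> (std_basis m)"
    if "x \<in> coord_space (Suc m)" for x
    using linear_functional_coord_space[OF \<mu>(1) that] by simp
  have a: "(\<Sum>l<m. a l * x l) * \<mu> (std_basis m) = - (\<Sum>j<m. x j * \<mu> (std_basis j))" for x
  proof -
    have "(\<Sum>l<m. a l * x l) * \<mu> (std_basis m) = (\<Sum>l<m. - (x l * \<mu> (std_basis l)))"
      unfolding sum_distrib_right using \<mu>(2) by (intro sum.cong refl) (simp add: a_def)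
    then show ?thesis by (simp add: sum_negf)
  qed
  show "\<mu> (graph_embed a m x) = 0"
    using \<mu>_x[OF graph_embed_in_coord_space] a by (simp add: graph_embed_def)
  assume x: "x \<in> coord_space (Suc m)" "\<mu> x = 0"
  have "(\<Sum>l<m. a l * x l) * \<mu> (std_basis m) = x m * \<mu> (std_basis m)"
    using \<mu>_x[OF x(1)] x(2) a[of x] by (metis add.commute neg_eq_iff_add_eq_0)
  then have "x m = (\<Sum>l<m. a l * x l)"
    using \<mu>(2) by simp
  with x(1) show "graph_embed a m x = x"
    by (auto simp: graph_embed_def coord_space_def fun_eq_iff)
qed

lemma exists_translation_noninvariant_subst_last:
  fixes F :: "(nat \<Rightarrow> nat) \<Rightarrow> 'a::field_char_0"
  assumes n: "n \<ge> 1" and \<mu>: "linear_functional \<mu>" "\<mu> (std_basis (n - 1)) \<noteq> 0"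
    and vf: "vertex_free {form_eval n d F} {x \<in> coord_space n. \<mu> x = 0}"
    and w: "w \<in> coord_space (n - 1)" "w \<noteq> (\<lambda>_. 0)"
  defines "a \<equiv> \<lambda>i. - \<mu> (std_basis i) / \<mu> (std_basis (n - 1))"
  shows "\<exists>x t. subst_last n d F a (\<lambda>i. x i + t * w i) \<noteq> subst_last n d F a x"
proof -
  let ?F = "form_eval n d F" and ?emb = "graph_embed a (n - 1)"
  have Suc: "Suc (n - 1) = n" using n by simp
  note kernel = graph_embed_kernel[OF \<mu>, folded a_def, unfolded Suc]
  obtain i where "w i \<noteq> 0" using w(2) by auto
  moreover have "i < n - 1" using coord_space_nonzero_index[OF w(1) \<open>w i \<noteq> 0\<close>] .
  ultimately have "?emb w \<noteq> (\<lambda>_. 0)"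
    by (metis graph_embed_def)
  then obtain x t where x: "x \<in> coord_space n" "\<mu> x = 0" "?F (\<lambda>i. x i + t * ?emb w i) \<noteq> ?F x"
    using vf graph_embed_in_coord_space[of a "n - 1" w] kernel(1) unfolding vertex_free_def Suc
    by blast
  have "subst_last n d F a (\<lambda>i. x i + t * w i) = ?F (\<lambda>i. x i + t * ?emb w i)"
    using kernel(2)[OF x(1,2)] by (simp add: subst_last_eq_graph_embed[OF n] graph_embed_lincomb)
  moreover have "subst_last n d F a x = ?F x"
    using kernel(2)[OF x(1,2)] by (simp add: subst_last_eq_graph_embed[OF n])
  ultimately show ?thesis using x(3) by metis
qed

lemma polyfun_subst_last:
  assumes "n \<ge> 1"
  shows "polyfun (n - 1) (subst_last n d (F :: (nat \<Rightarrow> nat) \<Rightarrow> 'a::comm_ring_1) a)"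
proof -
  have eq: "subst_last n d F a = (\<lambda>x. form_eval n d F (\<lambda>i. if i = n - 1 then (\<Sum>l<n - 1. a l * x l) else x i))"
    by (rule ext) (simp add: subst_last_def fun_upd_def cong: if_cong)
  have coord: "polyfun (n - 1) (\<lambda>x. if i = n - 1 then \<Sum>l<n - 1. a l * x l else x i)" if "i < n" for i
    using that by (cases "i = n - 1")
      (simp_all add: polyfun_var, intro polyfun_sum polyfun_mult polyfun_const polyfun_var, auto)
  show ?thesis
    unfolding eq by (rule polyfun_compose[OF polyfun_form_eval coord])
qed

lemma polyfun_dir_deriv_subst_last:
  assumes "n \<ge> 1"
  shows "polyfun (n - 1) (\<lambda>a. dir_deriv (subst_last n d (F :: (nat \<Rightarrow> nat) \<Rightarrow> 'a::field_char_0) a) y v)"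
proof -
  define X where "X a i = (if i = n - 1 then (\<Sum>l<n - 1. a l * y l) else y i)" for a :: "nat \<Rightarrow> 'a" and i
  define W where "W a i = (if i = n - 1 then (\<Sum>l<n - 1. a l * v l) else v i)" for a :: "nat \<Rightarrow> 'a" and i
  have "polyfun (n - 1) (\<lambda>a. X a i)" "polyfun (n - 1) (\<lambda>a. W a i)" for i
    unfolding X_def W_def
    by (cases "i = n - 1", simp_all add: polyfun_const,
        intro polyfun_sum polyfun_mult polyfun_const polyfun_var, auto)+
  then obtain Q where Q: "\<forall>a t. poly (Q a) t = form_eval n d F (\<lambda>i. X a i + t * W a i)"
    "\<forall>j. polyfun (n - 1) (\<lambda>a. coeff (Q a) j)"
    using polyfun_restrict_line[OF polyfun_form_eval] by blast
  have "line_poly (subst_last n d F a) y v = Q a" for a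
  proof (rule line_poly_eqI)
    fix t
    have "(\<lambda>i. y i + t * v i)(n - 1 := \<Sum>l<n - 1. a l * (y l + t * v l)) = (\<lambda>i. X a i + t * W a i)"
      by (rule ext) (simp add: X_def W_def algebra_simps sum.distrib sum_distrib_left)
    then show "poly (Q a) t = subst_last n d F a (\<lambda>i. y i + t * v i)"
      using Q(1) by (simp add: subst_last_def)
  qed
  then show ?thesis
    using Q(2) by (simp add: dir_deriv_def)
qed

section \<open>Determinants of directional derivatives\<close>

lemma mat_mult_vec_nth:
  "v \<in> carrier_vec k \<Longrightarrow> i < k \<Longrightarrow> (mat k k f *\<^sub>v v) $ i = (\<Sum>j<k. f (i, j) * v $ j)"
  by (simp add: scalar_prod_def atLeast0LessThan)

lemma polyfun_det:
  assumes "\<And>i j. i < n \<Longrightarrow> j < n \<Longrightarrow> polyfun k (\<lambda>a. A a i j)"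
  shows "polyfun k (\<lambda>a. det (mat n n (\<lambda>(i, j). A a i j)))"
proof -
  have "det (mat n n (\<lambda>(i, j). A a i j)) =
      (\<Sum>p\<in>{p. p permutes {0..<n}}. signof p * (\<Prod>i=0..<n. A a i (p i)))" for a
  proof -
    have "det (mat n n (\<lambda>(i, j). A a i j)) =
        (\<Sum>p\<in>{p. p permutes {0..<n}}. signof p * (\<Prod>i=0..<n. mat n n (\<lambda>(i, j). A a i j) $$ (i, p i)))"
      by (rule det_def') simp
    also have "\<dots> = (\<Sum>p\<in>{p. p permutes {0..<n}}. signof p * (\<Prod>i=0..<n. A a i (p i)))"
      by (intro sum.cong refl arg_cong2[where f = "(*)"] prod.cong)
        (auto dest: permutes_in_image)
    finally show ?thesis .
  qed
  moreover have "polyfun k (\<lambda>a. \<Sum>p\<in>{p. p permutes {0..<n}}. signof p * (\<Prod>i=0..<n. A a i (p i)))"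
    using assms
    by (intro polyfun_sum polyfun_mult polyfun_const polyfun_prod finite_permutations)
      (auto dest: permutes_in_image)
  ultimately show ?thesis by simp
qed

text \<open>Choosing the points \<open>y\<^sub>i\<close> one at a time: the cofactors of the last row of the matrix built
  so far give a nonzero combination of the \<open>g\<^sub>j\<close>, which is nonzero at some point \<open>y\<^sub>r\<close>.\<close>

lemma exists_points_det_nonzero:
  fixes g :: "nat \<Rightarrow> 'b \<Rightarrow> 'a::field"
  assumes "\<And>c. (\<exists>j<r. c j \<noteq> 0) \<Longrightarrow> \<exists>y. (\<Sum>j<r. c j * g j y) \<noteq> 0"
  shows "\<exists>ys. det (mat r r (\<lambda>(i, j). g j (ys i))) \<noteq> 0"
  using assms
proof (induction r)
  case 0
  show ?case by (simp add: det_def)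
next
  case (Suc r)
  have "\<exists>y. (\<Sum>j<r. c j * g j y) \<noteq> 0" if "\<exists>j<r. c j \<noteq> 0" for c
  proof -
    let ?c = "\<lambda>j. if j < r then c j else 0"
    have "\<exists>j<Suc r. ?c j \<noteq> 0" using that by auto
    then obtain y where "(\<Sum>j<Suc r. ?c j * g j y) \<noteq> 0"
      using Suc.prems[of ?c] by blast
    then have "(\<Sum>j<r. c j * g j y) \<noteq> 0" by simp
    then show ?thesis by blast
  qed
  then obtain ys where ys: "det (mat r r (\<lambda>(i, j). g j (ys i))) \<noteq> 0"
    using Suc.IH by blast
  define A where "A y = mat (Suc r) (Suc r) (\<lambda>(i, j). g j ((ys(r := y)) i))" for y
  have A: "A y \<in> carrier_mat (Suc r) (Suc r)" for y
    by (simp add: A_def)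
  have delete: "mat_delete (A y) r j = mat_delete (A y') r j" for y y' j
    by (rule eq_matI) (auto simp: A_def mat_delete_def)
  have delete_last: "mat_delete (A y) r r = mat r r (\<lambda>(i, j). g j (ys i))" for y
    by (rule eq_matI) (auto simp: A_def mat_delete_def)
  define c where "c j = cofactor (A undefined) r j" for j
  have "c r \<noteq> 0"
    using ys delete_last by (simp add: c_def cofactor_def)
  then obtain y where y: "(\<Sum>j<Suc r. c j * g j y) \<noteq> 0"
    using Suc.prems[of c] by blast
  have "det (A y) = (\<Sum>j<Suc r. A y $$ (r, j) * cofactor (A y) r j)"
    by (rule laplace_expansion_row[OF A]) simp
  also have "\<dots> = (\<Sum>j<Suc r. c j * g j y)"
  proof (intro sum.cong refl)
    fix j assume "j \<in> {..<Suc r}"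
    then have "A y $$ (r, j) = g j y"
      by (simp add: A_def)
    moreover have "cofactor (A y) r j = c j"
      unfolding c_def cofactor_def using delete[where y = y and y' = undefined and j = j] by simp
    ultimately show "A y $$ (r, j) * cofactor (A y) r j = c j * g j y"
      by simp
  qed
  finally have "det (A y) \<noteq> 0"
    using y by simp
  then show ?case
    unfolding A_def by blast
qed

lemma exists_points_det_dir_deriv_nonzero:
  fixes f :: "(nat \<Rightarrow> 'a::field_char_0) \<Rightarrow> 'a"
  assumes "polyfun m f" "\<And>w. w \<in> coord_space m \<Longrightarrow> w \<noteq> (\<lambda>_. 0) \<Longrightarrow> \<exists>y. dir_deriv f y w \<noteq> 0"
  shows "\<exists>ys. det (mat m m (\<lambda>(i, j). dir_deriv f (ys i) (std_basis j))) \<noteq> 0"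
proof (rule exists_points_det_nonzero)
  fix c :: "nat \<Rightarrow> 'a" assume "\<exists>j<m. c j \<noteq> 0"
  define w where "w i = (if i < m then c i else 0)" for i
  have w: "w \<in> coord_space m" "w \<noteq> (\<lambda>_. 0)"
    using \<open>\<exists>j<m. c j \<noteq> 0\<close> by (auto simp: w_def coord_space_def fun_eq_iff)
  then obtain y where "dir_deriv f y w \<noteq> 0"
    using assms(2) by blast
  moreover have "dir_deriv f y w = (\<Sum>j<m. c j * dir_deriv f y (std_basis j))"
    using linear_functional_coord_space[OF linear_functional_dir_deriv[OF assms(1)] w(1)]
    by (simp add: w_def)
  ultimately show "\<exists>y. (\<Sum>j<m. c j * dir_deriv f y (std_basis j)) \<noteq> 0" by auto
qed

lemma exists_nonzero_solution:
  fixes L :: "nat \<Rightarrow> nat \<Rightarrow> 'a::field"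
  assumes "k < m"
  shows "\<exists>w\<in>coord_space m. w \<noteq> (\<lambda>_. 0) \<and> (\<forall>j<k. (\<Sum>i<m. L j i * w i) = 0)"
proof -
  define A where "A = mat m m (\<lambda>(j, i). if j < k then L j i else 0)"
  have A: "A \<in> carrier_mat m m" by (simp add: A_def)
  have "det A = (\<Sum>j<m. A $$ (m - 1, j) * cofactor A (m - 1) j)"
    using assms by (intro laplace_expansion_row[OF A]) simp
  also have "\<dots> = 0"
  proof -
    have "\<not> m - 1 < k" using assms by simp
    then show ?thesis by (intro sum.neutral) (simp add: A_def)
  qed
  finally obtain v where v: "v \<in> carrier_vec m" "v \<noteq> 0\<^sub>v m" "A *\<^sub>v v = 0\<^sub>v m"
    using det_0_iff_vec_prod_zero[OF A] by blast
  define w where "w i = (if i < m then v $ i else 0)" for i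
  have "w \<in> coord_space m" by (simp add: w_def coord_space_def)
  moreover have "w \<noteq> (\<lambda>_. 0)"
    using v(1,2) by (auto simp: w_def fun_eq_iff vec_eq_iff)
  moreover have "(\<Sum>i<m. L j i * w i) = 0" if "j < k" for j
  proof -
    have "(A *\<^sub>v v) $ j = (\<Sum>i<m. (if j < k then L j i else 0) * v $ i)"
      unfolding A_def using that assms by (subst mat_mult_vec_nth[OF v(1)]) auto
    also have "\<dots> = (\<Sum>i<m. L j i * w i)"
      using that by (intro sum.cong) (auto simp: w_def)
    finally show ?thesis
      using v(3) that assms by simp
  qed
  ultimately show ?thesis by blast
qed

lemma det_dir_deriv_eq_0_if_invariant:
  fixes f :: "(nat \<Rightarrow> 'a::field_char_0) \<Rightarrow> 'a"
  assumes "polyfun m f" "w \<in> coord_space m" "w \<noteq> (\<lambda>_. 0)" "\<And>x t. f (\<lambda>i. x i + t * w i) = f x"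
  shows "det (mat m m (\<lambda>(i, j). dir_deriv f (ys i) (std_basis j))) = 0"
proof -
  let ?M = "mat m m (\<lambda>(i, j). dir_deriv f (ys i) (std_basis j))"
  let ?v = "vec m w"
  have "?v \<noteq> 0\<^sub>v m"
    using assms(2,3) coord_space_nonzero_index[OF assms(2)] by (auto simp: vec_eq_iff fun_eq_iff)
  moreover have "?M *\<^sub>v ?v = 0\<^sub>v m"
  proof (rule eq_vecI)
    fix i assume "i < dim_vec (0\<^sub>v m :: 'a vec)"
    then have i: "i < m" by simp
    have "(?M *\<^sub>v ?v) $ i = (\<Sum>j<m. w j * dir_deriv f (ys i) (std_basis j))"
      using mat_mult_vec_nth[of ?v m i "\<lambda>(i, j). dir_deriv f (ys i) (std_basis j)"] i
      by (simp add: mult.commute)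
    also have "\<dots> = dir_deriv f (ys i) w"
      using linear_functional_coord_space[OF linear_functional_dir_deriv[OF assms(1)] assms(2)] by simp
    also have "\<dots> = 0"
      using assms(4) by (rule dir_deriv_eq_0_if_invariant)
    finally show "(?M *\<^sub>v ?v) $ i = 0\<^sub>v m $ i" using i by simp
  qed simp
  ultimately show ?thesis
    by (subst det_0_iff_vec_prod_zero[of ?M m]) (auto intro!: exI[of _ ?v])
qed

text \<open>A representation of \<open>f\<close> through fewer than \<open>m\<close> linear forms has a common zero \<open>w \<noteq> 0\<close> of
  these forms, i.e. a vertex of \<open>f\<close>; it makes all directional derivatives dependent.\<close>

lemma concise_fn_if_det_dir_deriv_nonzero:
  fixes f :: "(nat \<Rightarrow> 'a::field_char_0) \<Rightarrow> 'a"
  assumes "polyfun m f" "det (mat m m (\<lambda>(i, j). dir_deriv f (ys i) (std_basis j))) \<noteq> 0"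
  shows "concise_fn m d f"
  unfolding concise_fn_def
proof
  assume "\<exists>k<m. \<exists>L G. \<forall>x. f x = form_eval k d G (\<lambda>j. \<Sum>i<m. L j i * x i)"
  then obtain k L G where k: "k < m" and f: "\<And>x. f x = form_eval k d G (\<lambda>j. \<Sum>i<m. L j i * x i)"
    by blast
  obtain w where w: "w \<in> coord_space m" "w \<noteq> (\<lambda>_. 0)" "\<And>j. j < k \<Longrightarrow> (\<Sum>i<m. L j i * w i) = 0"
    using exists_nonzero_solution[OF k, of L] by blast
  have "f (\<lambda>i. x i + t * w i) = f x" for x t
    unfolding f
  proof (rule polyfun_cong[OF polyfun_form_eval])
    fix j assume "j < k"
    have "(\<Sum>i<m. L j i * (x i + t * w i)) = (\<Sum>i<m. L j i * x i) + t * (\<Sum>i<m. L j i * w i)"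
      by (simp add: algebra_simps sum.distrib sum_distrib_left)
    then show "(\<Sum>i<m. L j i * (x i + t * w i)) = (\<Sum>i<m. L j i * x i)"
      using w(3)[OF \<open>j < k\<close>] by simp
  qed
  then show False
    using det_dir_deriv_eq_0_if_invariant[OF assms(1) w(1,2)] assms(2) by blast
qed

theorem lemma4p5:
  fixes F :: "(nat \<Rightarrow> nat) \<Rightarrow> 'a::{alg_closed_field, field_char_0}"
    and n d :: nat
  assumes "n \<ge> 3" and "d \<ge> 2"
    and "concise n d F"
  shows "\<exists>(D::nat) (P :: (nat \<Rightarrow> nat) \<Rightarrow> 'a).
           (\<exists>\<alpha>\<in>monoms_le (n - 1) D. P \<alpha> \<noteq> 0) \<and>
           (\<forall>a. poly_eval (n - 1) D P a \<noteq> 0 \<longrightarrow> concise_fn (n - 1) d (subst_last n d F a))"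
proof -
  have n: "n \<ge> 1" using assms(1) by simp
  obtain \<mu> where \<mu>: "linear_functional \<mu>" "\<mu> (std_basis (n - 1)) \<noteq> 0"
    "vertex_free {form_eval n d F} {x \<in> coord_space n. \<mu> x = 0}"
    using exists_vertex_free_hyperplane_transversal[OF n assms(3)] by blast
  define a\<^sub>0 where "a\<^sub>0 = (\<lambda>i. - \<mu> (std_basis i) / \<mu> (std_basis (n - 1)))"
  let ?\<Delta> = "\<lambda>ys a. det (mat (n - 1) (n - 1) (\<lambda>(i, j). dir_deriv (subst_last n d F a) (ys i) (std_basis j)))"
  have "\<exists>y. dir_deriv (subst_last n d F a\<^sub>0) y w \<noteq> 0"
    if "w \<in> coord_space (n - 1)" "w \<noteq> (\<lambda>_. 0)" for w
    using exists_translation_noninvariant_subst_last[OF n \<mu> that, folded a\<^sub>0_def]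
      invariant_if_dir_deriv_eq_0[OF polyfun_subst_last[OF n]] by blast
  then obtain ys where ys: "?\<Delta> ys a\<^sub>0 \<noteq> 0"
    using exists_points_det_dir_deriv_nonzero[OF polyfun_subst_last[OF n]] by blast
  obtain D P where DP: "\<And>a. ?\<Delta> ys a = poly_eval (n - 1) D P a"
    using polyfun_imp_poly_eval[OF polyfun_det[
          where A = "\<lambda>a i j. dir_deriv (subst_last n d F a) (ys i) (std_basis j)",
          OF polyfun_dir_deriv_subst_last[OF n]]]
    by blast
  have "\<exists>\<alpha>\<in>monoms_le (n - 1) D. P \<alpha> \<noteq> 0"
  proof (rule ccontr)
    assume "\<not> ?thesis"
    then have "poly_eval (n - 1) D P a\<^sub>0 = 0" by (simp add: poly_eval_def)
    then show False using ys DP by simp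
  qed
  moreover have "concise_fn (n - 1) d (subst_last n d F a)" if "poly_eval (n - 1) D P a \<noteq> 0" for a
    using concise_fn_if_det_dir_deriv_nonzero[OF polyfun_subst_last[OF n]] that DP by metis
  ultimately show ?thesis by blast
qed

end
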